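(* Consider the news-sharing game described in the context. For any finite number of agents $n$ and any parameters $q\in(1/2,1)$, integers $K\ge 1$, $1\le C\le K/2$, and $\lambda\in[0,1]$, there exists a symmetric Bayesian Nash equilibrium. Moreover, for any parameters $q,K,C,\lambda$ there exists a limit equilibrium.
   Context: Model: $n$ agents learn about a state $\omega\in\{-1,1\}$ with uniform common prior. Agent $i$ receives a private binary signal (story) $s_i\in\{-1,1\}$; signals are conditionally i.i.d. with $\mathbb{P}[s_i=\omega\mid\omega]=q$, $1/2<q<1$. Each posted story has a popularity score, starting at $1$ when posted and increasing by $1$ whenever it is shared. Fix a news-feed size $K\ge1$ and capacity $C\le K/2$. The first $K$ agents see no feed and just post their stories. Each agent $i\ge K+1$ sees a news feed of $K$ stories drawn independently with replacement from the $i-1$ predecessor stories: for each slot, with probability $\lambda$ (the virality weight) a story is drawn with probability proportional to current popularity scores, and otherwise uniformly at random. The agent sees only the realizations (not scores or times), shares exactly $C$ of the $K$ feed stories (each share adds 1 to that story's score), receiving utility $u>0$ per shared story equal to $\omega$, and posts own story $s_i$. Agents are uniformly randomly ordered and do not know their positions: an agent without a feed believes they are uniformly in positions $1,\dots,K$; an agent with a feed believes they are uniformly in positions $K+1,\dots,n$. Everything is common knowledge. A (mixed) strategy is $\sigma:\{-1,1\}\times\{0,\dots,K\}\to\Delta(\{0,\dots,C\})$, where $\sigma(s,k)$ is the distribution of the number of positive stories shared given own story $s$ and $k$ positive stories in the feed, supported in $[\max(0,C+k-K),\min(k,C)]$; strategies are viewed as points in a Euclidean space. $\sigma$ is state symmetric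 if $\sigma(s,k)(z)=\sigma(-s,K-k)(C-z)$ for all $s,k,z$. A symmetric BNE is a Bayesian Nash equilibrium in which all agents use the same state-symmetric strategy. A strategy $\sigma^*$ is a limit equilibrium (for fixed $q,K,C,\lambda$) if there are symmetric BNE $\sigma^{(j)}$ of games with $n_j\to\infty$ agents and the same $q,K,C,\lambda$ with $\sigma^{(j)}\to\sigma^*$. *)

theory Defs
  imports "HOL-Probability.Probability"
begin

text \<open>States and signals take values in {-1,1} (as int).
  A posted story is a pair (value, popularity score).  A strategy maps own
  signal s and number k of positive feed stories to a distribution over the
  number z of positive stories shared.\<close>

type_synonym strategy = "int \<Rightarrow> nat \<Rightarrow> nat pmf"
type_synonym story = "int \<times> nat"

definition signal_pmf :: "real \<Rightarrow> int \<Rightarrow> int pmf" where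
  "signal_pmf q \<omega> = map_pmf (\<lambda>b. if b then \<omega> else - \<omega>) (bernoulli_pmf q)"

definition slot_pmf :: "real \<Rightarrow> story list \<Rightarrow> nat pmf" where
  "slot_pmf lam st = do {
     b \<leftarrow> bernoulli_pmf lam;
     if b then pmf_of_multiset (\<Sum>j<length st. replicate_mset (snd (st ! j)) j)
     else pmf_of_set {..<length st} }"

definition feed_pmf :: "real \<Rightarrow> nat \<Rightarrow> story list \<Rightarrow> nat list pmf" where
  "feed_pmf lam K st = replicate_pmf K (slot_pmf lam st)"

definition feed_vals :: "story list \<Rightarrow> nat list \<Rightarrow> int list" where
  "feed_vals st idx = map (\<lambda>j. fst (st ! j)) idx"

definition num_pos :: "int list \<Rightarrow> nat" where
  "num_pos vs = length (filter (\<lambda>v. v = 1) vs)"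

definition share_pmf :: "int list \<Rightarrow> nat \<Rightarrow> nat \<Rightarrow> nat set pmf" where
  "share_pmf vs C z = do {
     A \<leftarrow> pmf_of_set {A. A \<subseteq> {p. p < length vs \<and> vs ! p = 1} \<and> card A = z};
     B \<leftarrow> pmf_of_set {B. B \<subseteq> {p. p < length vs \<and> vs ! p \<noteq> 1} \<and> card B = C - z};
     return_pmf (A \<union> B) }"

definition update_scores :: "story list \<Rightarrow> nat list \<Rightarrow> nat set \<Rightarrow> story list" where
  "update_scores st idx Sh =
     map (\<lambda>j. (fst (st ! j), snd (st ! j) + card {p \<in> Sh. p < length idx \<and> idx ! p = j}))
         [0..<length st]"

definition step_pmf :: "real \<Rightarrow> nat \<Rightarrow> nat \<Rightarrow> real \<Rightarrow> strategy \<Rightarrow> int \<Rightarrow> story list \<Rightarrow> story list pmf" where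
  "step_pmf q K C lam \<sigma> \<omega> st = do {
     idx \<leftarrow> feed_pmf lam K st;
     s \<leftarrow> signal_pmf q \<omega>;
     z \<leftarrow> \<sigma> s (num_pos (feed_vals st idx));
     Sh \<leftarrow> share_pmf (feed_vals st idx) C z;
     return_pmf (update_scores st idx Sh @ [(s, 1)]) }"

text \<open>Distribution of the posted stories (with scores) after the first m agents have acted,
  when all agents with a feed use strategy sigma and the state is omega.\<close>
fun hist_pmf :: "real \<Rightarrow> nat \<Rightarrow> nat \<Rightarrow> real \<Rightarrow> strategy \<Rightarrow> int \<Rightarrow> nat \<Rightarrow> story list pmf" where
  "hist_pmf q K C lam \<sigma> \<omega> 0 = return_pmf []"
| "hist_pmf q K C lam \<sigma> \<omega> (Suc m) = do {
     st \<leftarrow> hist_pmf q K C lam \<sigma> \<omega> m;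
     if m < K then map_pmf (\<lambda>s. st @ [(s, 1)]) (signal_pmf q \<omega>)
     else step_pmf q K C lam \<sigma> \<omega> st }"

text \<open>Observation (own signal, number of positive feed stories) of the agent in
  (1-indexed) position i >= K+1, given state omega.\<close>
definition obs_pmf :: "real \<Rightarrow> nat \<Rightarrow> nat \<Rightarrow> real \<Rightarrow> strategy \<Rightarrow> int \<Rightarrow> nat \<Rightarrow> (int \<times> nat) pmf" where
  "obs_pmf q K C lam \<sigma> \<omega> i = do {
     st \<leftarrow> hist_pmf q K C lam \<sigma> \<omega> (i - 1);
     idx \<leftarrow> feed_pmf lam K st;
     s \<leftarrow> signal_pmf q \<omega>;
     return_pmf (s, num_pos (feed_vals st idx)) }"

text \<open>Joint probability (from the viewpoint of an agent with a feed, who believes to be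
  uniformly in positions K+1..n) of state omega and observation (s,k).\<close>
definition joint_prob :: "nat \<Rightarrow> real \<Rightarrow> nat \<Rightarrow> nat \<Rightarrow> real \<Rightarrow> strategy \<Rightarrow> int \<Rightarrow> int \<Rightarrow> nat \<Rightarrow> real" where
  "joint_prob n q K C lam \<sigma> \<omega> s k =
     (1/2) * (1 / real (n - K)) * (\<Sum>i\<in>{K+1..n}. pmf (obs_pmf q K C lam \<sigma> \<omega> i) (s, k))"

definition share_utility :: "real \<Rightarrow> nat \<Rightarrow> int \<Rightarrow> nat \<Rightarrow> real" where
  "share_utility u C \<omega> z = u * (if \<omega> = 1 then real z else real (C - z))"

text \<open>(Joint-probability weighted) interim expected utility of the type (s,k) sharing z
  positive stories while everybody else uses sigma.\<close>
definition exp_util :: "nat \<Rightarrow> real \<Rightarrow> nat \<Rightarrow> nat \<Rightarrow> real \<Rightarrow> real \<Rightarrow> strategy \<Rightarrow> int \<Rightarrow> nat \<Rightarrow> nat \<Rightarrow> real" where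
  "exp_util n q K C lam u \<sigma> s k z =
     (\<Sum>\<omega>\<in>{-1, 1::int}. joint_prob n q K C lam \<sigma> \<omega> s k * share_utility u C \<omega> z)"

definition feasible :: "nat \<Rightarrow> nat \<Rightarrow> nat \<Rightarrow> nat set" where
  "feasible K C k = {C + k - K .. min k C}"

definition valid_strategy :: "nat \<Rightarrow> nat \<Rightarrow> strategy \<Rightarrow> bool" where
  "valid_strategy K C \<sigma> \<longleftrightarrow>
     (\<forall>s\<in>{-1, 1}. \<forall>k\<le>K. set_pmf (\<sigma> s k) \<subseteq> feasible K C k)"

definition state_symmetric :: "nat \<Rightarrow> nat \<Rightarrow> strategy \<Rightarrow> bool" where
  "state_symmetric K C \<sigma> \<longleftrightarrow>
     (\<forall>s\<in>{-1, 1}. \<forall>k\<le>K. \<forall>z\<le>C. pmf (\<sigma> s k) z = pmf (\<sigma> (- s) (K - k)) (C - z))"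

definition symmetric_BNE :: "nat \<Rightarrow> real \<Rightarrow> nat \<Rightarrow> nat \<Rightarrow> real \<Rightarrow> real \<Rightarrow> strategy \<Rightarrow> bool" where
  "symmetric_BNE n q K C lam u \<sigma> \<longleftrightarrow>
     valid_strategy K C \<sigma> \<and> state_symmetric K C \<sigma> \<and>
     (\<forall>s\<in>{-1, 1}. \<forall>k\<le>K. \<forall>z\<in>feasible K C k.
        (\<Sum>z'\<le>C. pmf (\<sigma> s k) z' * exp_util n q K C lam u \<sigma> s k z')
          \<ge> exp_util n q K C lam u \<sigma> s k z)"

definition limit_equilibrium :: "real \<Rightarrow> nat \<Rightarrow> nat \<Rightarrow> real \<Rightarrow> real \<Rightarrow> strategy \<Rightarrow> bool" where
  "limit_equilibrium q K C lam u \<sigma>' \<longleftrightarrow>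
     valid_strategy K C \<sigma>' \<and>
     (\<exists>ns :: nat \<Rightarrow> nat. \<exists>\<sigma>s :: nat \<Rightarrow> strategy.
        filterlim ns at_top sequentially \<and>
        (\<forall>j. symmetric_BNE (ns j) q K C lam u (\<sigma>s j)) \<and>
        (\<forall>s\<in>{-1, 1}. \<forall>k\<le>K. \<forall>z\<le>C. (\<lambda>j. pmf (\<sigma>s j s k) z) \<longlonglongrightarrow> pmf (\<sigma>' s k) z))"

end

(* Equilibria are found among extreme strategies: for p in [0,1]^{0..K}, an agent with a positive
   signal who sees k positive stories shares as many positive stories as feasible with probability
   p k and as few as feasible otherwise, and agents with a negative signal play the mirror image.
   Such strategies are state symmetric, and flipping every sign maps the sharing process in state
   omega onto the process in state -omega, so a negative-signal type faces the payoffs of the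
   mirrored positive-signal type.  Utility is linear in the number z of positive stories shared, so
   the payoff of type (1, k) is affine in z with slope u times the gain
   P(omega = 1, s = 1, k) - P(omega = -1, s = 1, k).  All distributions of the process are finitely
   supported with point masses continuous in p, hence p k |-> clamp (p k + gain) is a continuous
   self-map of the cube; at a Brouwer fixed point p k = 1 when the gain is positive and p k = 0 when
   it is negative, which is a best response.  Compactness of the cube gives limit equilibria. *)

theory Submission
  imports Defs "HOL-Homology.Homology"
begin

section \<open>Brouwer's fixed point theorem for finite-dimensional cubes\<close>

definition sqnorm_upto :: "nat \<Rightarrow> (nat \<Rightarrow> real) \<Rightarrow> real" where
  "sqnorm_upto N x = (\<Sum>i\<le>N. (x i)^2)"

definition sphere_upto :: "nat \<Rightarrow> (nat \<Rightarrow> real) set" where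
  "sphere_upto N = {x. sqnorm_upto N x = 1 \<and> (\<forall>i>N. x i = 0)}"

definition ball_upto :: "nat \<Rightarrow> (nat \<Rightarrow> real) set" where
  "ball_upto N = {x. sqnorm_upto N x \<le> 1 \<and> (\<forall>i>N. x i = 0)}"

definition cube_upto :: "nat \<Rightarrow> (nat \<Rightarrow> real) set" where
  "cube_upto N = {x. (\<forall>i\<le>N. 0 \<le> x i \<and> x i \<le> 1) \<and> (\<forall>i>N. x i = 0)}"

lemma cube_upto_range: "x \<in> cube_upto N \<Longrightarrow> 0 \<le> x i \<and> x i \<le> 1"
  unfolding cube_upto_def by (cases "i \<le> N") auto

definition normalize_upto :: "nat \<Rightarrow> (nat \<Rightarrow> real) \<Rightarrow> nat \<Rightarrow> real" where
  "normalize_upto N v = (\<lambda>i. v i / sqrt (sqnorm_upto N v))"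

lemma sqnorm_upto_pos:
  assumes "\<forall>i>N. v i = 0" "v \<noteq> (\<lambda>i. 0)"
  shows "0 < sqnorm_upto N v"
proof -
  obtain j where j: "v j \<noteq> 0" using assms(2) by auto
  with assms(1) have "j \<le> N" by (meson not_le)
  have "0 < (v j)^2" using j by simp
  also have "\<dots> \<le> sqnorm_upto N v"
    unfolding sqnorm_upto_def by (rule member_le_sum) (use \<open>j \<le> N\<close> in auto)
  finally show ?thesis .
qed

lemma sqnorm_upto_scale: "sqnorm_upto N (\<lambda>i. t * x i) = t^2 * sqnorm_upto N x"
  unfolding sqnorm_upto_def by (simp add: power_mult_distrib sum_distrib_left)

lemma normalize_upto_in_sphere:
  assumes "\<forall>i>N. v i = 0" "v \<noteq> (\<lambda>i. 0)"
  shows "normalize_upto N v \<in> sphere_upto N"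
proof -
  have pos: "0 < sqnorm_upto N v" using sqnorm_upto_pos[OF assms] .
  have "sqnorm_upto N (normalize_upto N v) = (\<Sum>i\<le>N. (v i)^2 / sqnorm_upto N v)"
    unfolding normalize_upto_def sqnorm_upto_def[of N "\<lambda>i. _ i / _"]
    using pos by (simp add: power_divide)
  also have "\<dots> = 1"
    using pos by (simp add: sum_divide_distrib[symmetric] sqnorm_upto_def)
  finally show ?thesis unfolding sphere_upto_def normalize_upto_def using assms(1) by auto
qed

lemma normalize_upto_sphere: "x \<in> sphere_upto N \<Longrightarrow> normalize_upto N x = x"
  unfolding sphere_upto_def normalize_upto_def by auto

lemma continuous_on_normalize_upto:
  assumes "continuous_on S v" "\<And>z. z \<in> S \<Longrightarrow> sqnorm_upto N (v z) \<noteq> 0"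
  shows "continuous_on S (\<lambda>z. normalize_upto N (v z))"
proof -
  have coord: "continuous_on S (\<lambda>z. v z i)" for i
    using assms(1) by (rule continuous_on_product_then_coordinatewise)
  have "continuous_on S (\<lambda>z. sqnorm_upto N (v z))"
    unfolding sqnorm_upto_def by (intro continuous_intros coord)
  then show ?thesis
    unfolding normalize_upto_def using assms(2) by (intro continuous_intros coord) auto
qed

lemma nsphere_eq_sphere_upto: "nsphere N = top_of_set (sphere_upto N)"
  by (simp add: nsphere euclidean_product_topology sphere_upto_def sqnorm_upto_def)

lemma homotopic_normalize_upto:
  fixes h :: "real \<times> 'a::topological_space \<Rightarrow> nat \<Rightarrow> real"
  assumes cont: "continuous_on ({0..1} \<times> S) h"
    and supp: "\<And>z i. z \<in> {0..1} \<times> S \<Longrightarrow> N < i \<Longrightarrow> h z i = 0"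
    and nonzero: "\<And>z. z \<in> {0..1} \<times> S \<Longrightarrow> h z \<noteq> (\<lambda>i. 0)"
    and f: "\<And>x. x \<in> S \<Longrightarrow> f x = normalize_upto N (h (0, x))"
    and g: "\<And>x. x \<in> S \<Longrightarrow> g x = normalize_upto N (h (1, x))"
  shows "homotopic_with_canon (\<lambda>_. True) S (sphere_upto N) f g"
proof -
  have "continuous_on ({0..1} \<times> S) (\<lambda>z. normalize_upto N (h z))"
    using cont by (rule continuous_on_normalize_upto) (metis sqnorm_upto_pos supp nonzero less_irrefl)
  moreover have "(\<lambda>z. normalize_upto N (h z)) \<in> {0..1} \<times> S \<rightarrow> sphere_upto N"
    using normalize_upto_in_sphere supp nonzero by auto
  ultimately have cont_normalized: "continuous_map (prod_topology (top_of_set {0..1}) (top_of_set S))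
      (top_of_set (sphere_upto N)) (\<lambda>z. normalize_upto N (h z))"
    by (simp add: continuous_map_subtopology_eu)
  show ?thesis
    by (subst homotopic_with, simp, intro exI conjI ballI, rule cont_normalized) (simp_all add: f g)
qed

lemma sphere_upto_subset_ball_upto: "sphere_upto N \<subseteq> ball_upto N"
  unfolding sphere_upto_def ball_upto_def by auto

lemma scaled_sphere_upto_in_ball_upto:
  assumes "t \<in> {0..1}" "x \<in> sphere_upto N"
  shows "(\<lambda>i. t * x i) \<in> ball_upto N"
proof -
  have "t^2 \<le> 1" using assms(1) by (simp add: power_le_one)
  then show ?thesis using assms unfolding ball_upto_def sphere_upto_def by (simp add: sqnorm_upto_scale)
qed

text \<open>For a fixed-point-free self-map \<open>f\<close> of the ball, the normalised displacement
  \<open>x - f x\<close> on the sphere is homotopic to the identity through \<open>x - t f x\<close> and to a constant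
  through \<open>t x - f (t x)\<close>; no term vanishes because \<open>f\<close> has no fixed point.\<close>

lemma displacement_homotopic_id:
  assumes cont: "continuous_on (ball_upto N) f" and maps: "f ` ball_upto N \<subseteq> ball_upto N"
    and no_fix: "\<And>x. x \<in> ball_upto N \<Longrightarrow> f x \<noteq> x"
  shows "homotopic_with_canon (\<lambda>_. True) (sphere_upto N) (sphere_upto N)
           id (\<lambda>x. normalize_upto N (\<lambda>i. x i - f x i))"
proof (rule homotopic_normalize_upto[where h = "\<lambda>z i. snd z i - fst z * f (snd z) i"])
  let ?D = "{0..1::real} \<times> sphere_upto N"
  have "continuous_on ?D (\<lambda>z. f (snd z) i)" for i
    by (rule continuous_on_product_then_coordinatewise,
        rule continuous_on_compose2[OF cont continuous_on_snd[OF continuous_on_id]])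
       (use sphere_upto_subset_ball_upto in auto)
  moreover have "continuous_on ?D (\<lambda>z. snd z i)" for i
    by (rule continuous_on_product_then_coordinatewise, rule continuous_on_snd, rule continuous_on_id)
  ultimately show "continuous_on ?D (\<lambda>z i. snd z i - fst z * f (snd z) i)"
    by (intro continuous_intros)
  fix z assume "z \<in> ?D"
  then have "snd z \<in> sphere_upto N" and t: "0 \<le> fst z" "fst z \<le> 1"
    by auto
  then have x: "snd z \<in> ball_upto N" "sqnorm_upto N (snd z) = 1" "\<forall>i>N. snd z i = 0"
    using sphere_upto_subset_ball_upto unfolding sphere_upto_def by auto
  have "f (snd z) \<in> ball_upto N"
    using maps x(1) by auto
  then have fx: "sqnorm_upto N (f (snd z)) \<le> 1" "\<forall>i>N. f (snd z) i = 0"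
    unfolding ball_upto_def by auto
  with x(3) show "N < i \<Longrightarrow> snd z i - fst z * f (snd z) i = 0" for i
    by simp
  show "(\<lambda>i. snd z i - fst z * f (snd z) i) \<noteq> (\<lambda>i. 0)"
  proof
    assume "(\<lambda>i. snd z i - fst z * f (snd z) i) = (\<lambda>i. 0)"
    then have x_eq: "snd z = (\<lambda>i. fst z * f (snd z) i)"
      by (metis (no_types, lifting) eq_iff_diff_eq_0 ext)
    have "1 = (fst z)^2 * sqnorm_upto N (f (snd z))"
      using x(2) by (subst (asm) x_eq) (simp add: sqnorm_upto_scale)
    also have "\<dots> \<le> (fst z)^2"
      using fx(1) by (simp add: mult_left_le)
    also have "\<dots> \<le> fst z"
      using t by (simp add: power2_eq_square mult_left_le_one_le)
    finally have "fst z = 1" using t by simp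
    with x_eq have "f (snd z) = snd z" by simp
    with x(1) no_fix show False by blast
  qed
qed (simp_all add: normalize_upto_sphere)

lemma displacement_homotopic_const:
  assumes cont: "continuous_on (ball_upto N) f" and maps: "f ` ball_upto N \<subseteq> ball_upto N"
    and no_fix: "\<And>x. x \<in> ball_upto N \<Longrightarrow> f x \<noteq> x"
  shows "homotopic_with_canon (\<lambda>_. True) (sphere_upto N) (sphere_upto N)
           (\<lambda>_. normalize_upto N (\<lambda>i. - f (\<lambda>j. 0) i)) (\<lambda>x. normalize_upto N (\<lambda>i. x i - f x i))"
proof (rule homotopic_normalize_upto[where h = "\<lambda>z i. fst z * snd z i - f (\<lambda>j. fst z * snd z j) i"])
  let ?D = "{0..1::real} \<times> sphere_upto N"
  have snd_coord: "continuous_on ?D (\<lambda>z. snd z i)" for i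
    by (rule continuous_on_product_then_coordinatewise, rule continuous_on_snd, rule continuous_on_id)
  have "continuous_on ?D (\<lambda>z. f (\<lambda>j. fst z * snd z j) i)" for i
    by (rule continuous_on_product_then_coordinatewise, rule continuous_on_compose2[OF cont],
        intro continuous_intros snd_coord) (use scaled_sphere_upto_in_ball_upto in auto)
  with snd_coord show "continuous_on ?D (\<lambda>z i. fst z * snd z i - f (\<lambda>j. fst z * snd z j) i)"
    by (intro continuous_intros)
  fix z assume "z \<in> ?D"
  then have tx: "(\<lambda>j. fst z * snd z j) \<in> ball_upto N"
    using scaled_sphere_upto_in_ball_upto by auto
  moreover have "f (\<lambda>j. fst z * snd z j) \<in> ball_upto N"
    using maps tx by auto
  ultimately show "N < i \<Longrightarrow> fst z * snd z i - f (\<lambda>j. fst z * snd z j) i = 0" for i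
    unfolding ball_upto_def by auto
  show "(\<lambda>i. fst z * snd z i - f (\<lambda>j. fst z * snd z j) i) \<noteq> (\<lambda>i. 0)"
  proof
    assume "(\<lambda>i. fst z * snd z i - f (\<lambda>j. fst z * snd z j) i) = (\<lambda>i. 0)"
    then have "f (\<lambda>j. fst z * snd z j) = (\<lambda>j. fst z * snd z j)"
      by (metis (no_types, lifting) eq_iff_diff_eq_0 ext)
    with tx no_fix show False by auto
  qed
qed simp_all

lemma ball_upto_fixpoint:
  assumes cont: "continuous_on (ball_upto N) f" and maps: "f ` ball_upto N \<subseteq> ball_upto N"
  shows "\<exists>x\<in>ball_upto N. f x = x"
proof (rule ccontr)
  assume "\<not> (\<exists>x\<in>ball_upto N. f x = x)"
  then have no_fix: "\<And>x. x \<in> ball_upto N \<Longrightarrow> f x \<noteq> x" by blast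
  have "contractible (sphere_upto N)"
    using homotopic_with_trans[OF displacement_homotopic_id[OF cont maps no_fix]
        homotopic_with_symD[OF displacement_homotopic_const[OF cont maps no_fix]]]
    unfolding contractible_def by blast
  then show False
    using non_contractible_space_nsphere by (simp add: nsphere_eq_sphere_upto)
qed

definition clamp_upto :: "nat \<Rightarrow> (nat \<Rightarrow> real) \<Rightarrow> nat \<Rightarrow> real" where
  "clamp_upto N y = (\<lambda>i. if i \<le> N then max 0 (min 1 (y i)) else 0)"

lemma clamp_upto_in_cube_upto: "clamp_upto N y \<in> cube_upto N"
  unfolding clamp_upto_def cube_upto_def by auto

lemma clamp_upto_cube_upto: "y \<in> cube_upto N \<Longrightarrow> clamp_upto N y = y"
  unfolding clamp_upto_def cube_upto_def by (auto simp: not_le)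

lemma continuous_on_clamp_upto: "continuous_on S (clamp_upto N)"
proof (rule continuous_on_coordinatewise_then_product)
  fix i show "continuous_on S (\<lambda>y. clamp_upto N y i)"
    unfolding clamp_upto_def
    by (cases "i \<le> N") (simp_all add: continuous_on_max continuous_on_min
        continuous_on_subset[OF continuous_on_product_coordinates])
qed

lemma shrunk_cube_upto_in_ball_upto:
  assumes "x \<in> cube_upto N"
  shows "(\<lambda>i. x i / (real N + 1)) \<in> ball_upto N"
proof -
  have "sqnorm_upto N (\<lambda>i. x i / (real N + 1)) \<le> (\<Sum>i\<le>N. 1 / (real N + 1)^2)"
    unfolding sqnorm_upto_def
  proof (rule sum_mono)
    fix i
    have "(x i)^2 \<le> 1"
      using cube_upto_range[OF assms, of i] by (simp add: power_le_one)
    then show "(x i / (real N + 1))^2 \<le> 1 / (real N + 1)^2"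
      by (simp add: power_divide divide_right_mono)
  qed
  also have "\<dots> = 1 / (real N + 1)"
    by (simp add: power2_eq_square add.commute)
  also have "\<dots> \<le> 1"
    by simp
  finally show ?thesis
    using assms unfolding ball_upto_def cube_upto_def by auto
qed

text \<open>The cube is a retract of a multiple of the ball, which transfers the fixed point.\<close>

lemma cube_upto_fixpoint:
  assumes cont: "continuous_on (cube_upto N) f" and maps: "f ` cube_upto N \<subseteq> cube_upto N"
  shows "\<exists>x\<in>cube_upto N. f x = x"
proof -
  define c where "c = real N + 1"
  have c: "0 < c" unfolding c_def by simp
  define r where "r y = clamp_upto N (\<lambda>i. c * y i)" for y
  define g where "g y = (\<lambda>i. f (r y) i / c)" for y
  have r: "r y \<in> cube_upto N" for y
    unfolding r_def by (rule clamp_upto_in_cube_upto)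
  have "continuous_on UNIV r"
    unfolding r_def by (intro continuous_on_compose2[OF continuous_on_clamp_upto] continuous_intros) auto
  then have cont_fr: "continuous_on UNIV (\<lambda>y. f (r y))"
    by (rule continuous_on_compose2[OF cont]) (use r in auto)
  have "continuous_on (ball_upto N) g"
    unfolding g_def
    by (rule continuous_on_coordinatewise_then_product, rule continuous_on_divide,
        rule continuous_on_subset[OF continuous_on_product_then_coordinatewise[OF cont_fr]])
       (use c in auto)
  moreover have "g y \<in> ball_upto N" for y
    using shrunk_cube_upto_in_ball_upto[of "f (r y)" N] maps r unfolding g_def c_def by auto
  ultimately obtain y where "g y = y"
    using ball_upto_fixpoint[of N g] by blast
  then have y: "f (r y) = (\<lambda>i. c * y i)"
    using c unfolding g_def by (auto simp: fun_eq_iff field_simps)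
  moreover have "f (r y) \<in> cube_upto N"
    using maps r by blast
  ultimately have "r y = (\<lambda>i. c * y i)"
    unfolding r_def by (simp add: clamp_upto_cube_upto)
  with y have "f (r y) = r y"
    by simp
  with r show ?thesis
    by blast
qed

section \<open>Mirror symmetry of the sharing process\<close>

text \<open>On story values in \<open>{-1, 1}\<close> this is negation; the definition makes \<open>flip_sign v = 1\<close>
  equivalent to \<open>v \<noteq> 1\<close> for arbitrary \<open>v\<close>, so no range invariant is needed.\<close>

definition flip_sign :: "int \<Rightarrow> int" where
  "flip_sign v = (if v = 1 then -1 else 1)"

definition flip_stories :: "story list \<Rightarrow> story list" where
  "flip_stories st = map (\<lambda>x. (flip_sign (fst x), snd x)) st"

definition mirror_symmetric :: "nat \<Rightarrow> nat \<Rightarrow> strategy \<Rightarrow> bool" where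
  "mirror_symmetric K C \<sigma> \<longleftrightarrow>
     (\<forall>s k. k \<le> K \<longrightarrow> \<sigma> (flip_sign s) (K - k) = map_pmf (\<lambda>z. C - z) (\<sigma> s k)) \<and>
     (\<forall>s k. k \<le> K \<longrightarrow> set_pmf (\<sigma> s k) \<subseteq> {..C})"

text \<open>Feeds are drawn from proper histories only; on others \<open>slot_pmf\<close> applies
  \<open>pmf_of_multiset\<close> and \<open>pmf_of_set\<close> to empty arguments.\<close>

definition proper_history :: "story list \<Rightarrow> bool" where
  "proper_history st \<longleftrightarrow> st \<noteq> [] \<and> (\<forall>x\<in>set st. 1 \<le> snd x)"

lemma flip_sign_eq_1 [simp]: "flip_sign v = 1 \<longleftrightarrow> v \<noteq> 1"
  by (simp add: flip_sign_def)

lemma flip_stories_append: "flip_stories (xs @ [(s, c)]) = flip_stories xs @ [(flip_sign s, c)]"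
  by (simp add: flip_stories_def)

lemma slot_pmf_flip_stories: "slot_pmf lam (flip_stories st) = slot_pmf lam st"
proof -
  have len: "length (flip_stories st) = length st"
    by (simp add: flip_stories_def)
  have "(\<Sum>j<length st. replicate_mset (snd (flip_stories st ! j)) j)
      = (\<Sum>j<length st. replicate_mset (snd (st ! j)) j)"
    by (rule sum.cong) (auto simp: flip_stories_def)
  then show ?thesis
    by (simp only: slot_pmf_def len)
qed

lemma feed_pmf_flip_stories: "feed_pmf lam K (flip_stories st) = feed_pmf lam K st"
  unfolding feed_pmf_def slot_pmf_flip_stories ..

lemma num_pos_le_length: "num_pos vs \<le> length vs"
  unfolding num_pos_def by simp

lemma num_pos_map_flip_sign: "num_pos (map flip_sign vs) = length vs - num_pos vs"
proof -
  have "length (filter (\<lambda>v. v = 1) vs) + length (filter (\<lambda>v. v \<noteq> 1) vs) = length vs"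
    by (rule sum_length_filter_compl)
  then show ?thesis
    unfolding num_pos_def by (simp add: o_def)
qed

lemma share_pmf_map_flip_sign:
  assumes "z \<le> C"
  shows "share_pmf (map flip_sign vs) C (C - z) = share_pmf vs C z"
proof -
  have "{p. p < length (map flip_sign vs) \<and> map flip_sign vs ! p = 1} = {p. p < length vs \<and> vs ! p \<noteq> 1}"
    and "{p. p < length (map flip_sign vs) \<and> map flip_sign vs ! p \<noteq> 1} = {p. p < length vs \<and> vs ! p = 1}"
    by auto
  then show ?thesis
    unfolding share_pmf_def using assms by (subst bind_commute_pmf) (simp add: Un_commute)
qed

lemma update_scores_flip_stories:
  "update_scores (flip_stories st) idx Sh = flip_stories (update_scores st idx Sh)"
  unfolding update_scores_def flip_stories_def by auto

lemma signal_pmf_flip_sign: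
  "\<omega> \<in> {-1, 1} \<Longrightarrow> signal_pmf q (flip_sign \<omega>) = map_pmf flip_sign (signal_pmf q \<omega>)"
  unfolding signal_pmf_def by (auto simp: pmf.map_comp o_def flip_sign_def intro!: map_pmf_cong)

lemma set_slot_pmf:
  assumes "proper_history st"
  shows "set_pmf (slot_pmf lam st) \<subseteq> {..<length st}"
proof -
  define M where "M = (\<Sum>j<length st. replicate_mset (snd (st ! j)) j)"
  have st: "0 < length st" "1 \<le> snd (st ! 0)"
    using assms unfolding proper_history_def by (auto simp: nth_mem)
  have "set_mset M = (\<Union>j<length st. set_mset (replicate_mset (snd (st ! j)) j))"
    unfolding M_def by (simp add: set_mset_sum)
  then have "0 \<in># M" and M: "set_mset M \<subseteq> {..<length st}"
    using st by (auto split: if_splits)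
  then have "set_pmf (pmf_of_multiset M) \<subseteq> {..<length st}"
    using M by (subst set_pmf_of_multiset) auto
  moreover have "set_pmf (pmf_of_set {..<length st}) = {..<length st}"
    using st(1) by (intro set_pmf_of_set) auto
  ultimately show ?thesis
    unfolding slot_pmf_def M_def[symmetric] by (auto split: if_splits)
qed

lemma set_feed_pmf:
  assumes "proper_history st" "idx \<in> set_pmf (feed_pmf lam K st)"
  shows "length idx = K" "set idx \<subseteq> {..<length st}"
  using assms set_slot_pmf[OF assms(1), of lam] unfolding feed_pmf_def set_replicate_pmf by auto

lemma feed_vals_flip_stories:
  assumes "proper_history st" "idx \<in> set_pmf (feed_pmf lam K st)"
  shows "feed_vals (flip_stories st) idx = map flip_sign (feed_vals st idx)"
  using set_feed_pmf[OF assms] unfolding feed_vals_def flip_stories_def by auto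

lemma length_feed_vals:
  assumes "proper_history st" "idx \<in> set_pmf (feed_pmf lam K st)"
  shows "length (feed_vals st idx) = K"
  using set_feed_pmf[OF assms] unfolding feed_vals_def by simp

lemma length_update_scores [simp]: "length (update_scores st idx Sh) = length st"
  unfolding update_scores_def by simp

lemma update_scores_pos:
  "\<forall>x\<in>set st. 1 \<le> snd x \<Longrightarrow> \<forall>x\<in>set (update_scores st idx Sh). 1 \<le> snd x"
  unfolding update_scores_def by (auto simp: nth_mem trans_le_add1)

lemma num_pos_feed_vals_le:
  assumes "proper_history st" "idx \<in> set_pmf (feed_pmf lam K st)"
  shows "num_pos (feed_vals st idx) \<le> K"
  using num_pos_le_length length_feed_vals[OF assms] by metis

lemma set_hist_pmf:
  "st \<in> set_pmf (hist_pmf q K C lam \<sigma> \<omega> m) \<Longrightarrow> length st = m \<and> (\<forall>x\<in>set st. 1 \<le> snd x)"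
proof (induction m arbitrary: st)
  case (Suc m)
  then obtain st0 where st0: "st0 \<in> set_pmf (hist_pmf q K C lam \<sigma> \<omega> m)"
    and st: "st \<in> set_pmf (if m < K then map_pmf (\<lambda>s. st0 @ [(s, 1)]) (signal_pmf q \<omega>)
                            else step_pmf q K C lam \<sigma> \<omega> st0)"
    by auto
  then show ?case
    using st Suc.IH[OF st0] update_scores_pos[of st0]
    by (fastforce simp: step_pmf_def split: if_splits)
qed simp

lemma proper_history_hist_pmf:
  "st \<in> set_pmf (hist_pmf q K C lam \<sigma> \<omega> m) \<Longrightarrow> 1 \<le> K \<Longrightarrow> K \<le> m \<Longrightarrow> proper_history st"
  using set_hist_pmf[of st] unfolding proper_history_def by fastforce

lemma bind_share_pmf_mirror:
  assumes sym: "mirror_symmetric K C \<sigma>" and k: "num_pos vs \<le> K"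
  shows "\<sigma> (flip_sign s) (K - num_pos vs) \<bind> (\<lambda>z. share_pmf (map flip_sign vs) C z \<bind> F)
       = \<sigma> s (num_pos vs) \<bind> (\<lambda>z. share_pmf vs C z \<bind> F)"
proof -
  have "\<sigma> (flip_sign s) (K - num_pos vs) = map_pmf (\<lambda>z. C - z) (\<sigma> s (num_pos vs))"
    and "set_pmf (\<sigma> s (num_pos vs)) \<subseteq> {..C}"
    using sym k unfolding mirror_symmetric_def by blast+
  then show ?thesis
    by (auto simp: bind_map_pmf share_pmf_map_flip_sign intro!: bind_pmf_cong)
qed

lemma step_pmf_flip:
  assumes sym: "mirror_symmetric K C \<sigma>" and \<omega>: "\<omega> \<in> {-1, 1}" and st: "proper_history st"
  shows "step_pmf q K C lam \<sigma> (flip_sign \<omega>) (flip_stories st)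
       = map_pmf flip_stories (step_pmf q K C lam \<sigma> \<omega> st)"
  using st
  by (simp add: step_pmf_def feed_pmf_flip_stories signal_pmf_flip_sign[OF \<omega>] bind_map_pmf
      map_bind_pmf feed_vals_flip_stories length_feed_vals num_pos_map_flip_sign num_pos_feed_vals_le
      bind_share_pmf_mirror[OF sym] update_scores_flip_stories flip_stories_append cong: bind_pmf_cong)

lemma hist_pmf_flip:
  assumes sym: "mirror_symmetric K C \<sigma>" and \<omega>: "\<omega> \<in> {-1, 1}" and K: "1 \<le> K"
  shows "hist_pmf q K C lam \<sigma> (flip_sign \<omega>) m = map_pmf flip_stories (hist_pmf q K C lam \<sigma> \<omega> m)"
proof (induction m)
  case (Suc m)
  have "(if m < K then map_pmf (\<lambda>s. flip_stories st @ [(s, 1)]) (signal_pmf q (flip_sign \<omega>))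
         else step_pmf q K C lam \<sigma> (flip_sign \<omega>) (flip_stories st))
      = map_pmf flip_stories (if m < K then map_pmf (\<lambda>s. st @ [(s, 1)]) (signal_pmf q \<omega>)
         else step_pmf q K C lam \<sigma> \<omega> st)"
    if "st \<in> set_pmf (hist_pmf q K C lam \<sigma> \<omega> m)" for st
    using that proper_history_hist_pmf[OF that K] step_pmf_flip[OF sym \<omega>]
    by (simp add: signal_pmf_flip_sign[OF \<omega>] pmf.map_comp o_def flip_stories_append)
  then show ?case
    by (simp add: Suc.IH bind_map_pmf map_bind_pmf cong: bind_pmf_cong)
qed (simp add: flip_stories_def)

lemma set_signal_pmf: "set_pmf (signal_pmf q \<omega>) \<subseteq> {\<omega>, -\<omega>}"
  unfolding signal_pmf_def by auto

lemma obs_pmf_flip: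
  assumes sym: "mirror_symmetric K C \<sigma>" and \<omega>: "\<omega> \<in> {-1, 1}" and K: "1 \<le> K" and i: "K + 1 \<le> i"
  shows "obs_pmf q K C lam \<sigma> (flip_sign \<omega>) i
       = map_pmf (\<lambda>(s, k). (flip_sign s, K - k)) (obs_pmf q K C lam \<sigma> \<omega> i)"
proof -
  have "K \<le> i - 1" using i by simp
  note proper = proper_history_hist_pmf[OF _ K this]
  show ?thesis
    by (simp add: obs_pmf_def hist_pmf_flip[OF sym \<omega> K] signal_pmf_flip_sign[OF \<omega>] bind_map_pmf
        map_bind_pmf feed_pmf_flip_stories feed_vals_flip_stories[OF proper] num_pos_map_flip_sign
        length_feed_vals[OF proper] cong: bind_pmf_cong)
qed

lemma set_obs_pmf:
  assumes \<omega>: "\<omega> \<in> {-1, 1}" and K: "1 \<le> K" and i: "K + 1 \<le> i"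
  shows "set_pmf (obs_pmf q K C lam \<sigma> \<omega> i) \<subseteq> {-1, 1} \<times> {..K}"
proof -
  have "K \<le> i - 1" using i by simp
  then show ?thesis
    using \<omega> set_signal_pmf[of q \<omega>] num_pos_feed_vals_le[OF proper_history_hist_pmf[OF _ K]]
    by (fastforce simp: obs_pmf_def)
qed

lemma pmf_map_inj_on_superset:
  assumes inj: "inj_on g D" and sub: "set_pmf M \<subseteq> D" and x: "x \<in> D"
  shows "pmf (map_pmf g M) (g x) = pmf M x"
proof (cases "x \<in> set_pmf M")
  case True
  then show ?thesis using pmf_map_inj[OF inj_on_subset[OF inj sub]] by blast
next
  case False
  then have "g x \<notin> g ` set_pmf M"
    using inj x sub by (auto dest: inj_onD)
  then show ?thesis
    using False by (simp add: pmf_map_outside pmf_eq_0_set_pmf)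
qed

lemma joint_prob_flip:
  assumes sym: "mirror_symmetric K C \<sigma>" and \<omega>: "\<omega> \<in> {-1, 1}" and K: "1 \<le> K"
    and s: "s \<in> {-1, 1}" and k: "k \<le> K"
  shows "joint_prob n q K C lam \<sigma> (flip_sign \<omega>) s k = joint_prob n q K C lam \<sigma> \<omega> (flip_sign s) (K - k)"
proof -
  let ?g = "\<lambda>(s :: int, k :: nat). (flip_sign s, K - k)"
  have inj: "inj_on ?g ({-1, 1} \<times> {..K})"
    by (auto simp: inj_on_def flip_sign_def)
  have g: "?g (flip_sign s, K - k) = (s, k)" and mem: "(flip_sign s, K - k) \<in> {-1, 1} \<times> {..K}"
    using s k by (auto simp: flip_sign_def)
  have "pmf (obs_pmf q K C lam \<sigma> (flip_sign \<omega>) i) (s, k) = pmf (obs_pmf q K C lam \<sigma> \<omega> i) (flip_sign s, K - k)"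
    if "i \<in> {K + 1..n}" for i
    using pmf_map_inj_on_superset[OF inj set_obs_pmf[OF \<omega> K] mem] that
    unfolding g by (simp add: obs_pmf_flip[OF sym \<omega> K])
  then have "(\<Sum>i\<in>{K + 1..n}. pmf (obs_pmf q K C lam \<sigma> (flip_sign \<omega>) i) (s, k))
      = (\<Sum>i\<in>{K + 1..n}. pmf (obs_pmf q K C lam \<sigma> \<omega> i) (flip_sign s, K - k))"
    by (rule sum.cong[OF refl])
  then show ?thesis
    unfolding joint_prob_def by simp
qed

section \<open>Extreme strategies\<close>

definition pos_share :: "nat \<Rightarrow> nat \<Rightarrow> (nat \<Rightarrow> real) \<Rightarrow> nat \<Rightarrow> nat pmf" where
  "pos_share K C p k = map_pmf (\<lambda>b. if b then min k C else C + k - K) (bernoulli_pmf (p k))"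

definition extreme_strategy :: "nat \<Rightarrow> nat \<Rightarrow> (nat \<Rightarrow> real) \<Rightarrow> strategy" where
  "extreme_strategy K C p s k =
     (if s = 1 then pos_share K C p k else map_pmf (\<lambda>z. C - z) (pos_share K C p (K - k)))"

lemma set_pos_share: "set_pmf (pos_share K C p k) \<subseteq> {C + k - K, min k C}"
  unfolding pos_share_def by auto

lemma set_extreme_strategy:
  assumes "k \<le> K" "C \<le> K"
  shows "set_pmf (extreme_strategy K C p s k) \<subseteq> feasible K C k"
proof -
  have pos: "set_pmf (pos_share K C p k') \<subseteq> feasible K C k'" if "k' \<le> K" for k'
    by (rule order_trans[OF set_pos_share]) (use that assms(2) in \<open>auto simp: feasible_def\<close>)
  show ?thesis
    using pos[OF assms(1)] pos[of "K - k"] assms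
    unfolding extreme_strategy_def by (auto simp: feasible_def subset_iff)
qed

lemma valid_strategy_extreme_strategy: "C \<le> K \<Longrightarrow> valid_strategy K C (extreme_strategy K C p)"
  unfolding valid_strategy_def using set_extreme_strategy by blast

lemma set_extreme_strategy_atMost:
  "k \<le> K \<Longrightarrow> C \<le> K \<Longrightarrow> set_pmf (extreme_strategy K C p s k) \<subseteq> {..C}"
  using set_extreme_strategy unfolding feasible_def by fastforce

lemma mirror_symmetric_extreme_strategy:
  assumes "C \<le> K"
  shows "mirror_symmetric K C (extreme_strategy K C p)"
  unfolding mirror_symmetric_def
proof (intro conjI allI impI)
  fix s k assume k: "k \<le> K"
  have "map_pmf (\<lambda>z. C - z) (map_pmf (\<lambda>z. C - z) (pos_share K C p (K - k))) = pos_share K C p (K - k)"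
    unfolding pmf.map_comp using set_pos_share[of K C p "K - k"]
    by (subst map_pmf_cong[where g = id]) auto
  then show "extreme_strategy K C p (flip_sign s) (K - k) = map_pmf (\<lambda>z. C - z) (extreme_strategy K C p s k)"
    using k by (auto simp: extreme_strategy_def flip_sign_def)
  show "set_pmf (extreme_strategy K C p s k) \<subseteq> {..C}"
    using set_extreme_strategy_atMost[OF k assms] .
qed

lemma pmf_map_reflect:
  assumes "set_pmf M \<subseteq> {..C}" "z \<le> C"
  shows "pmf (map_pmf (\<lambda>z. C - z) M) (C - z) = pmf M (z :: nat)"
  by (rule pmf_map_inj_on_superset[OF _ assms(1)]) (use assms(2) in \<open>auto simp: inj_on_def\<close>)

lemma state_symmetric_extreme_strategy:
  assumes "C \<le> K"
  shows "state_symmetric K C (extreme_strategy K C p)"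
  unfolding state_symmetric_def
proof (intro ballI allI impI)
  fix s k z assume s: "s \<in> {-1, 1::int}" and k: "k \<le> K" and z: "z \<le> C"
  have "flip_sign s = - s"
    using s by (auto simp: flip_sign_def)
  then have "extreme_strategy K C p (- s) (K - k) = map_pmf (\<lambda>z. C - z) (extreme_strategy K C p s k)"
    using mirror_symmetric_extreme_strategy[OF assms, of p] k unfolding mirror_symmetric_def by metis
  then show "pmf (extreme_strategy K C p s k) z = pmf (extreme_strategy K C p (- s) (K - k)) (C - z)"
    using pmf_map_reflect[OF set_extreme_strategy_atMost[OF k assms] z] by simp
qed

lemma sum_pos_share:
  assumes "0 \<le> p k" "p k \<le> 1" "k \<le> K" "C \<le> K"
  shows "(\<Sum>z\<le>C. pmf (pos_share K C p k) z * h z) = p k * h (min k C) + (1 - p k) * h (C + k - K)"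
proof -
  have "(\<Sum>z\<le>C. pmf (pos_share K C p k) z * h z) = (\<integral>z. h z \<partial>measure_pmf (pos_share K C p k))"
    by (subst integral_measure_pmf[of "{..C}"]) (use set_pos_share[of K C p k] assms in auto)
  then show ?thesis
    using assms unfolding pos_share_def by simp
qed

section \<open>Continuity in the strategy parameters\<close>

text \<open>Finitely many outcomes, uniformly in the parameter, make \<open>bind_pmf\<close> a finite sum of
  products, so continuity of the point masses propagates through the sharing process.\<close>

definition continuous_pmf_family :: "'b::topological_space set \<Rightarrow> ('b \<Rightarrow> 'a pmf) \<Rightarrow> bool" where
  "continuous_pmf_family P M \<longleftrightarrow>
     (\<exists>S. finite S \<and> (\<forall>p\<in>P. set_pmf (M p) \<subseteq> S)) \<and> (\<forall>x. continuous_on P (\<lambda>p. pmf (M p) x))"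

lemma continuous_pmf_family_const: "finite (set_pmf M) \<Longrightarrow> continuous_pmf_family P (\<lambda>_. M)"
  unfolding continuous_pmf_family_def by auto

lemma continuous_pmf_family_bind:
  assumes M: "continuous_pmf_family P M"
    and f: "\<And>p y. p \<in> P \<Longrightarrow> y \<in> set_pmf (M p) \<Longrightarrow> continuous_pmf_family P (\<lambda>p. f p y)"
  shows "continuous_pmf_family P (\<lambda>p. M p \<bind> f p)"
proof -
  obtain S' where "finite S'" "\<forall>p\<in>P. set_pmf (M p) \<subseteq> S'"
    using M unfolding continuous_pmf_family_def by blast
  define S where "S = (\<Union>p\<in>P. set_pmf (M p))"
  have S: "finite S"
    unfolding S_def by (rule finite_subset[OF _ \<open>finite S'\<close>]) (use \<open>\<forall>p\<in>P. _\<close> in blast)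
  have fy: "continuous_pmf_family P (\<lambda>p. f p y)" if "y \<in> S" for y
    using that f unfolding S_def by blast
  have "\<forall>y\<in>S. \<exists>T. finite T \<and> (\<forall>p\<in>P. set_pmf (f p y) \<subseteq> T)"
    using fy unfolding continuous_pmf_family_def by blast
  then obtain T where T: "\<And>y. y \<in> S \<Longrightarrow> finite (T y) \<and> (\<forall>p\<in>P. set_pmf (f p y) \<subseteq> T y)"
    by metis
  have eq: "pmf (M p \<bind> f p) x = (\<Sum>y\<in>S. pmf (M p) y * pmf (f p y) x)" if "p \<in> P" for p x
  proof -
    have "pmf (M p \<bind> f p) x = (\<Sum>y\<in>S. pmf (M p) y *\<^sub>R pmf (f p y) x)"
      unfolding pmf_bind by (rule integral_measure_pmf[OF S]) (use that in \<open>auto simp: S_def\<close>)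
    then show ?thesis by simp
  qed
  have "continuous_on P (\<lambda>p. pmf (M p \<bind> f p) x)" for x
  proof (rule continuous_on_eq)
    show "continuous_on P (\<lambda>p. \<Sum>y\<in>S. pmf (M p) y * pmf (f p y) x)"
      using M fy unfolding continuous_pmf_family_def by (intro continuous_on_sum continuous_on_mult) auto
  qed (simp add: eq)
  moreover have "\<forall>p\<in>P. set_pmf (M p \<bind> f p) \<subseteq> (\<Union>y\<in>S. T y)"
    using T unfolding S_def by fastforce
  moreover have "finite (\<Union>y\<in>S. T y)"
    using S T by auto
  ultimately show ?thesis
    unfolding continuous_pmf_family_def by blast
qed

lemma continuous_pmf_family_map:
  "continuous_pmf_family P M \<Longrightarrow> continuous_pmf_family P (\<lambda>p. map_pmf g (M p))"
  unfolding map_pmf_def by (rule continuous_pmf_family_bind) (auto intro: continuous_pmf_family_const)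

lemma continuous_pmf_family_bernoulli:
  assumes "continuous_on P g" "\<And>p. p \<in> P \<Longrightarrow> 0 \<le> g p \<and> g p \<le> 1"
  shows "continuous_pmf_family P (\<lambda>p. bernoulli_pmf (g p))"
proof -
  have "continuous_on P (\<lambda>p. pmf (bernoulli_pmf (g p)) b)" for b
  proof (rule continuous_on_eq)
    show "continuous_on P (\<lambda>p. if b then g p else 1 - g p)"
      using assms(1) by (cases b) (simp_all add: continuous_on_diff)
    show "(if b then g p else 1 - g p) = pmf (bernoulli_pmf (g p)) b" if "p \<in> P" for p
      using assms(2)[OF that] by (cases b) auto
  qed
  then show ?thesis
    unfolding continuous_pmf_family_def by (intro conjI exI[of _ UNIV]) auto
qed

lemma continuous_pmf_family_extreme_strategy:
  "continuous_pmf_family (cube_upto K) (\<lambda>p. extreme_strategy K C p s k)"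
proof -
  have pos: "continuous_pmf_family (cube_upto K) (\<lambda>p. pos_share K C p k')" for k'
    unfolding pos_share_def
    by (intro continuous_pmf_family_map continuous_pmf_family_bernoulli continuous_on_subset
        [OF continuous_on_product_coordinates]) (auto simp: cube_upto_range)
  then show ?thesis
    unfolding extreme_strategy_def by (cases "s = 1") (simp_all add: pos continuous_pmf_family_map)
qed

lemma finite_set_share_pmf:
  assumes "z \<in> feasible (length vs) C (num_pos vs)"
  shows "finite (set_pmf (share_pmf vs C z))"
proof -
  have subsets: "finite {A. A \<subseteq> S \<and> card A = n}" "{A. A \<subseteq> S \<and> card A = n} \<noteq> {}"
    if "finite S" "n \<le> card S" for S :: "nat set" and n
    using that obtain_subset_with_card_n[OF that(2)] by (auto intro: finite_subset[of _ "Pow S"])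
  have card_pos: "card {i. i < length ws \<and> ws ! i = 1} = num_pos ws" for ws :: "int list"
    unfolding num_pos_def by (simp add: length_filter_conv_card)
  have "{i. i < length vs \<and> vs ! i \<noteq> 1} = {i. i < length (map flip_sign vs) \<and> map flip_sign vs ! i = 1}"
    by auto
  then have "card {i. i < length vs \<and> vs ! i \<noteq> 1} = length vs - num_pos vs"
    using card_pos[of "map flip_sign vs"] num_pos_map_flip_sign by simp
  then show ?thesis
    using assms subsets card_pos[of vs] unfolding share_pmf_def feasible_def by auto
qed

lemma finite_set_feed_pmf: "proper_history st \<Longrightarrow> finite (set_pmf (feed_pmf lam K st))"
  by (rule finite_subset[OF _ finite_lists_length_eq[of "{..<length st}" K]]) (auto dest: set_feed_pmf)

lemma finite_set_signal_pmf: "finite (set_pmf (signal_pmf q \<omega>))"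
  unfolding signal_pmf_def by simp

lemma continuous_pmf_family_step:
  assumes C: "C \<le> K" and st: "proper_history st"
  shows "continuous_pmf_family (cube_upto K) (\<lambda>p. step_pmf q K C lam (extreme_strategy K C p) \<omega> st)"
proof -
  have share_finite: "finite (set_pmf (share_pmf (feed_vals st idx) C z))"
    if "idx \<in> set_pmf (feed_pmf lam K st)" "z \<in> set_pmf (extreme_strategy K C p s (num_pos (feed_vals st idx)))"
    for idx p s z
    using that(2) set_extreme_strategy[OF num_pos_feed_vals_le[OF st that(1)] C]
      length_feed_vals[OF st that(1)] by (intro finite_set_share_pmf) auto
  show ?thesis
    unfolding step_pmf_def
    by (intro continuous_pmf_family_bind continuous_pmf_family_const continuous_pmf_family_extreme_strategy)
       (auto simp: finite_set_feed_pmf[OF st] finite_set_signal_pmf share_finite)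
qed

lemma continuous_pmf_family_hist:
  assumes C: "C \<le> K" and K: "1 \<le> K"
  shows "continuous_pmf_family (cube_upto K) (\<lambda>p. hist_pmf q K C lam (extreme_strategy K C p) \<omega> m)"
proof (induction m)
  case (Suc m)
  have "continuous_pmf_family (cube_upto K) (\<lambda>p.
      if m < K then map_pmf (\<lambda>s. st @ [(s, 1)]) (signal_pmf q \<omega>)
      else step_pmf q K C lam (extreme_strategy K C p) \<omega> st)"
    if "st \<in> set_pmf (hist_pmf q K C lam (extreme_strategy K C p) \<omega> m)" for p st
    using continuous_pmf_family_step[OF C proper_history_hist_pmf[OF that K]]
    by (cases "m < K") (auto intro: continuous_pmf_family_const simp: finite_set_signal_pmf)
  then show ?case
    by (auto intro: continuous_pmf_family_bind[OF Suc.IH])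
qed (simp add: continuous_pmf_family_const)

lemma continuous_on_joint_prob:
  assumes C: "C \<le> K" and K: "1 \<le> K"
  shows "continuous_on (cube_upto K) (\<lambda>p. joint_prob n q K C lam (extreme_strategy K C p) \<omega> s k)"
proof -
  have "continuous_pmf_family (cube_upto K) (\<lambda>p. obs_pmf q K C lam (extreme_strategy K C p) \<omega> i)"
    if "K + 1 \<le> i" for i
  proof -
    have "K \<le> i - 1" using that by simp
    note feed_finite = finite_set_feed_pmf[OF proper_history_hist_pmf[OF _ K this]]
    show ?thesis
      unfolding obs_pmf_def
      by (intro continuous_pmf_family_bind[OF continuous_pmf_family_hist[OF C K]] continuous_pmf_family_const)
         (auto simp: finite_set_signal_pmf feed_finite)
  qed
  then show ?thesis
    unfolding joint_prob_def continuous_pmf_family_def by (intro continuous_intros) auto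
qed

section \<open>Fixed points of the gain update are equilibria\<close>

definition positive_gain :: "nat \<Rightarrow> real \<Rightarrow> nat \<Rightarrow> nat \<Rightarrow> real \<Rightarrow> (nat \<Rightarrow> real) \<Rightarrow> nat \<Rightarrow> real" where
  "positive_gain n q K C lam p k =
     joint_prob n q K C lam (extreme_strategy K C p) 1 1 k - joint_prob n q K C lam (extreme_strategy K C p) (-1) 1 k"

text \<open>By \<open>exp_util_affine\<close> below, sharing one more positive story changes the payoff of the
  type \<open>(1, k)\<close> by \<open>u * positive_gain n q K C lam p k\<close>; the update moves \<open>p k\<close> towards the
  better extreme.\<close>

definition gain_update :: "nat \<Rightarrow> real \<Rightarrow> nat \<Rightarrow> nat \<Rightarrow> real \<Rightarrow> (nat \<Rightarrow> real) \<Rightarrow> nat \<Rightarrow> real" where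
  "gain_update n q K C lam p k =
     (if k \<le> K then max 0 (min 1 (p k + positive_gain n q K C lam p k)) else 0)"

lemma gain_update_fixpoint:
  assumes C: "C \<le> K" and K: "1 \<le> K"
  shows "\<exists>p\<in>cube_upto K. gain_update n q K C lam p = p"
proof (rule cube_upto_fixpoint)
  have cont: "continuous_on (cube_upto K) (\<lambda>p. p k + positive_gain n q K C lam p k)" for k
    unfolding positive_gain_def
    by (intro continuous_intros continuous_on_joint_prob[OF C K]
        continuous_on_subset[OF continuous_on_product_coordinates]) auto
  show "continuous_on (cube_upto K) (gain_update n q K C lam)"
  proof (rule continuous_on_coordinatewise_then_product)
    fix k show "continuous_on (cube_upto K) (\<lambda>p. gain_update n q K C lam p k)"
      unfolding gain_update_def using cont[of k]
      by (cases "k \<le> K") (simp_all add: continuous_on_max continuous_on_min)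
  qed
  show "gain_update n q K C lam ` cube_upto K \<subseteq> cube_upto K"
    unfolding gain_update_def cube_upto_def by auto
qed

lemma exp_util_affine:
  "exp_util n q K C lam u \<sigma> s k z
     = u * (joint_prob n q K C lam \<sigma> (-1) s k * real (C - z) + joint_prob n q K C lam \<sigma> 1 s k * real z)"
  unfolding exp_util_def share_utility_def by (simp add: algebra_simps)

lemma pos_share_best_response:
  assumes p: "p \<in> cube_upto K" and fixed: "gain_update n q K C lam p = p"
    and k: "k \<le> K" and C: "C \<le> K" and u: "0 < u" and z: "z \<in> feasible K C k"
  shows "exp_util n q K C lam u (extreme_strategy K C p) 1 k z
       \<le> (\<Sum>z'\<le>C. pmf (pos_share K C p k) z' * exp_util n q K C lam u (extreme_strategy K C p) 1 k z')"
proof -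
  define a where "a = joint_prob n q K C lam (extreme_strategy K C p) (-1) 1 k"
  define b where "b = joint_prob n q K C lam (extreme_strategy K C p) 1 1 k"
  define hi lo where "hi = min k C" and "lo = C + k - K"
  let ?EU = "exp_util n q K C lam u (extreme_strategy K C p) 1 k"
  have EU: "?EU y = u * (a * (real C - real y) + b * real y)" if "y \<le> C" for y
    unfolding exp_util_affine a_def b_def using that by (simp add: of_nat_diff)
  have p01: "0 \<le> p k" "p k \<le> 1"
    using p k unfolding cube_upto_def by auto
  have z: "lo \<le> z" "z \<le> hi" "z \<le> C" "hi \<le> C" "lo \<le> C"
    using z k unfolding feasible_def hi_def lo_def by auto
  have pk: "p k = max 0 (min 1 (p k + (b - a)))"
    using fun_cong[OF fixed, of k] k unfolding gain_update_def positive_gain_def a_def b_def by simp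
  have "0 \<le> (b - a) * (p k * real hi + (1 - p k) * real lo - real z)"
  proof (cases "b - a" "0::real" rule: linorder_cases)
    case less
    with pk p01 have "p k = 0" by (simp add: max_def min_def split: if_splits)
    with less z show ?thesis by (simp add: mult_nonpos_nonpos)
  next
    case greater
    with pk p01 have "p k = 1" by (simp add: max_def min_def split: if_splits)
    with greater z show ?thesis by simp
  qed simp
  then have "0 \<le> u * ((b - a) * (p k * real hi + (1 - p k) * real lo - real z))"
    using u by simp
  moreover have "(\<Sum>z'\<le>C. pmf (pos_share K C p k) z' * ?EU z') - ?EU z
      = u * ((b - a) * (p k * real hi + (1 - p k) * real lo - real z))"
    unfolding sum_pos_share[of p k, OF p01 k C] hi_def[symmetric] lo_def[symmetric] EU[OF z(3)] EU[OF z(4)] EU[OF z(5)]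
    by (simp add: algebra_simps)
  ultimately show ?thesis
    by linarith
qed

lemma exp_util_extreme_strategy_flip:
  assumes C: "C \<le> K" and K: "1 \<le> K" and k: "k \<le> K" and z: "z \<le> C"
  shows "exp_util n q K C lam u (extreme_strategy K C p) (-1) k z
       = exp_util n q K C lam u (extreme_strategy K C p) 1 (K - k) (C - z)"
proof -
  note flip = joint_prob_flip[OF mirror_symmetric_extreme_strategy[OF C] _ K _ k, of _ "-1" n q lam]
  show ?thesis
    using flip[of 1] flip[of "-1"] z unfolding exp_util_affine by (simp add: flip_sign_def algebra_simps)
qed

lemma sum_atMost_reflect: "(\<Sum>z\<le>C. f z) = (\<Sum>y\<le>(C::nat). f (C - y))"
  by (rule sum.reindex_bij_witness[of _ "\<lambda>y. C - y" "\<lambda>y. C - y"]) auto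

lemma symmetric_BNE_extreme_strategy:
  assumes p: "p \<in> cube_upto K" and fixed: "gain_update n q K C lam p = p"
    and C: "C \<le> K" and K: "1 \<le> K" and u: "0 < u"
  shows "symmetric_BNE n q K C lam u (extreme_strategy K C p)"
  unfolding symmetric_BNE_def
proof (intro conjI ballI allI impI valid_strategy_extreme_strategy state_symmetric_extreme_strategy C)
  fix s k z assume s: "s \<in> {-1, 1::int}" and k: "k \<le> K" and z: "z \<in> feasible K C k"
  let ?\<sigma> = "extreme_strategy K C p"
  show "exp_util n q K C lam u ?\<sigma> s k z \<le> (\<Sum>z'\<le>C. pmf (?\<sigma> s k) z' * exp_util n q K C lam u ?\<sigma> s k z')"
  proof (cases "s = 1")
    case True
    then show ?thesis
      using pos_share_best_response[OF p fixed k C u z] by (simp add: extreme_strategy_def)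
  next
    case False
    then have s: "s = -1" using s by auto
    have mirror_z: "C - z \<in> feasible K C (K - k)" and "z \<le> C"
      using z k unfolding feasible_def by auto
    have set_share: "set_pmf (pos_share K C p (K - k)) \<subseteq> {..C}"
      using set_extreme_strategy_atMost[of "K - k" K C p 1] C by (simp add: extreme_strategy_def)
    have "(\<Sum>z'\<le>C. pmf (?\<sigma> s k) z' * exp_util n q K C lam u ?\<sigma> s k z')
        = (\<Sum>y\<le>C. pmf (pos_share K C p (K - k)) y * exp_util n q K C lam u ?\<sigma> 1 (K - k) y)"
      unfolding s by (subst sum_atMost_reflect)
        (auto simp: extreme_strategy_def pmf_map_reflect[OF set_share] exp_util_extreme_strategy_flip[OF C K k]
          intro!: sum.cong)
    also have "\<dots> \<ge> exp_util n q K C lam u ?\<sigma> 1 (K - k) (C - z)"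
      using pos_share_best_response[OF p fixed _ C u mirror_z] by simp
    finally show ?thesis
      unfolding s using exp_util_extreme_strategy_flip[OF C K k \<open>z \<le> C\<close>] by simp
  qed
qed

section \<open>Limit equilibria\<close>

lemma compact_cube_upto: "compact (cube_upto N)"
proof -
  have "cube_upto N = PiE UNIV (\<lambda>i. if i \<le> N then {0..1} else {0})"
    unfolding cube_upto_def by (fastforce simp: PiE_iff not_le split: if_splits)
  moreover have "compactin (product_topology (\<lambda>_. euclideanreal) UNIV) \<dots>"
    by (subst compactin_PiE) auto
  ultimately show ?thesis
    by (simp add: euclidean_product_topology compactin_euclidean_iff)
qed

lemma limit_equilibrium_extreme_strategy:
  assumes C: "C \<le> K" and K: "1 \<le> K" and P: "\<And>n. P n \<in> cube_upto K"
    and eq: "\<And>n. symmetric_BNE n q K C lam u (extreme_strategy K C (P n))"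
  shows "\<exists>\<sigma>. limit_equilibrium q K C lam u \<sigma>"
proof -
  obtain L r where L: "L \<in> cube_upto K" and r: "strict_mono r" and lim: "(P \<circ> r) \<longlonglongrightarrow> L"
    using compact_imp_seq_compact[OF compact_cube_upto] P by (metis seq_compactE)
  have tendsto: "(\<lambda>j. pmf (extreme_strategy K C (P (r j)) s k) z) \<longlonglongrightarrow> pmf (extreme_strategy K C L s k) z"
    for s k z
  proof -
    have "continuous_on (cube_upto K) (\<lambda>p. pmf (extreme_strategy K C p s k) z)"
      using continuous_pmf_family_extreme_strategy unfolding continuous_pmf_family_def by blast
    then show ?thesis
      using continuous_on_tendsto_compose[OF _ lim L] P by (simp add: o_def)
  qed
  show ?thesis
    unfolding limit_equilibrium_def
    by (intro exI[of _ "extreme_strategy K C L"] exI[of _ r] exI[of _ "\<lambda>j. extreme_strategy K C (P (r j))"]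
        conjI allI ballI impI valid_strategy_extreme_strategy[OF C] filterlim_subseq[OF r] eq tendsto)
qed

theorem proposition1:
  fixes q lam u :: real and K C :: nat
  assumes "1/2 < q" "q < 1" "1 \<le> K" "1 \<le> C" "2 * C \<le> K" "0 \<le> lam" "lam \<le> 1" "0 < u"
  shows "(\<forall>n::nat. \<exists>\<sigma>. symmetric_BNE n q K C lam u \<sigma>) \<and>
         (\<exists>\<sigma>. limit_equilibrium q K C lam u \<sigma>)"
proof -
  have C: "C \<le> K" and K: "1 \<le> K" and u: "0 < u"
    using assms by simp_all
  have "\<exists>p\<in>cube_upto K. symmetric_BNE n q K C lam u (extreme_strategy K C p)" for n
    using gain_update_fixpoint[OF C K] symmetric_BNE_extreme_strategy[OF _ _ C K u] by blast
  then obtain P where P: "\<And>n. P n \<in> cube_upto K"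
    and eq: "\<And>n. symmetric_BNE n q K C lam u (extreme_strategy K C (P n))"
    by metis
  then show ?thesis
    using limit_equilibrium_extreme_strategy[OF C K P eq] by blast
qed

end
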